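(* Let $n\ge1$, $D\ge1$, and let $X_n=\{\mathbf{x}^0,\ldots,\mathbf{x}^{n-1}\}\subseteq\{0,1\}^D$ consist of $n$ pairwise distinct vectors, indexed so that $\mathbf{a}\cdot\mathbf{x}^0<\cdots<\mathbf{a}\cdot\mathbf{x}^{n-1}$ for some $\mathbf{a}\in\mathbb{Z}^D$. Then there is a seven-layer Boolean threshold network with $D$ input nodes and $D$ output nodes that is a perfect autoencoder for $X_n$, in which the designated middle hidden layer has $2\lceil\log_2\sqrt n\rceil$ nodes and the other hidden layers together have $(D+5)\lceil\sqrt n\rceil+D$ nodes.
   Context: A Boolean threshold function is a map $\{0,1\}^h\to\{0,1\}$, $\mathbf{u}\mapsto[\mathbf{w}\cdot\mathbf{u}\ge\theta]$ (value $1$ iff $\mathbf{w}\cdot\mathbf{u}\ge\theta$) with $\mathbf{w}\in\mathbb{Z}^h,\theta\in\mathbb{Z}$. An $L$-layer Boolean threshold network has layers $1,\ldots,L$; layer $1$ is the input; each node of layer $t+1$ computes a Boolean threshold function of the values of layer $t$; layers $2,\ldots,L-1$ are hidden. If layer $k$ is designated the middle layer, the encoder $\mathbf{f}$ is the map from layer $1$ values to layer $k$ values and the decoder $\mathbf{g}$ the map from layer $k$ values to layer $L$ values; the network is a perfect autoencoder for $X_n$ if $\mathbf{g}(\mathbf{f}(\mathbf{x}^i))=\mathbf{x}^i$ for all $i$. *)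

theory Defs
  imports Complex_Main
begin

definition dot :: "int list \<Rightarrow> int list \<Rightarrow> int" where
  "dot w u = sum_list (map2 (*) w u)"

definition ivec :: "bool list \<Rightarrow> int list" where
  "ivec u = map of_bool u"

definition thr :: "int list \<times> int \<Rightarrow> bool list \<Rightarrow> bool" where
  "thr p u = (dot (fst p) (ivec u) \<ge> snd p)"

definition layer_apply :: "(int list \<times> int) list \<Rightarrow> bool list \<Rightarrow> bool list" where
  "layer_apply l u = map (\<lambda>p. thr p u) l"

(* A network with L layers is given by the list of its L-1 non-input layers
   (layers 2..L, in order); layer t (t \<ge> 2) is the list element at index t-2. *)
definition net_apply :: "(int list \<times> int) list list \<Rightarrow> bool list \<Rightarrow> bool list" where
  "net_apply Ls u = fold layer_apply Ls u"

fun wf_net :: "nat \<Rightarrow> (int list \<times> int) list list \<Rightarrow> bool" where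
  "wf_net d [] = True"
| "wf_net d (l # Ls) = ((\<forall>p\<in>set l. length (fst p) = d) \<and> wf_net (length l) Ls)"

end

theory Submission
  imports Defs
begin

(* Write i = p s + q with s = ceil (sqrt n) and p, q < s, and extend i |-> a . x^i to a strictly
   increasing V on all indices. Comparing a . x^i with the thresholds V (r s) yields the unary code
   of the row p. Every function f of p is the dot product of the unary code of p with the backward
   differences of f; hence V (p s + c), and with it the unary code of the column q, is one more
   threshold layer away, and a third layer turns both unary codes into binary codes of
   t = ceil (log2 (sqrt n)) bits, the 2 t middle nodes. The decoder gets the unary codes back with
   the weights 2^l, lets node (r, d) of its second layer fire iff r = p and bit d of x^(r s + q)
   is set, and finally takes the OR over r. *)

lemma strict_mono_extension:
  fixes v :: "nat \<Rightarrow> int"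
  assumes "\<And>i j. i < j \<Longrightarrow> j < n \<Longrightarrow> v i < v j"
  obtains V where "strict_mono V" and "\<And>i. i < n \<Longrightarrow> V i = v i"
proof
  define V where "V k = (if k < n then v k else v (n - 1) + int (k - n) + 1)" for k
  have below_last: "v k \<le> v (n - 1)" if "k < n" for k
  proof (cases "k < n - 1")
    case False
    with that have "k = n - 1"
      by linarith
    then show ?thesis
      by simp
  qed (use assms that in \<open>auto intro: less_imp_le\<close>)
  show "strict_mono V"
  proof (rule strict_monoI)
    fix k k' :: nat
    assume "k < k'"
    then show "V k < V k'"
      using assms[of k k'] below_last[of k] by (auto simp: V_def)
  qed
  show "V i = v i" if "i < n" for i
    using that by (simp add: V_def)
qed

lemma le_ceiling_sqrt_squared: "n \<le> nat \<lceil>sqrt (real n)\<rceil> ^ 2"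
proof -
  have "real n = sqrt (real n) ^ 2"
    by simp
  also have "\<dots> \<le> real (nat \<lceil>sqrt (real n)\<rceil>) ^ 2"
    by (intro power_mono real_nat_ceiling_ge) simp
  finally show ?thesis
    by (metis of_nat_le_iff of_nat_power)
qed

lemma ceiling_le_two_power_ceiling_log:
  fixes y :: real
  assumes "0 < y"
  shows "nat \<lceil>y\<rceil> \<le> 2 ^ nat \<lceil>log 2 y\<rceil>"
proof -
  have "y = 2 powr log 2 y"
    using assms by simp
  also have "\<dots> \<le> 2 powr real (nat \<lceil>log 2 y\<rceil>)"
    by (intro powr_mono real_nat_ceiling_ge) simp
  also have "\<dots> = real (2 ^ nat \<lceil>log 2 y\<rceil>)"
    by (simp add: powr_realpow)
  finally have "\<lceil>y\<rceil> \<le> int (2 ^ nat \<lceil>log 2 y\<rceil>)"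
    by (simp add: ceiling_le_iff)
  then show ?thesis
    by linarith
qed

lemma dot_append:
  assumes "length w = length u"
  shows "dot (w @ w') (ivec (u @ u')) = dot w (ivec u) + dot w' (ivec u')"
  using assms by (simp add: dot_def ivec_def)

lemma dot_replicate_zero: "dot (replicate m 0) u = 0"
  by (induction m arbitrary: u) (auto simp: dot_def neq_Nil_conv zip_Cons1 split: list.splits)

lemma dot_map_upt:
  "dot (map g [0..<m]) (ivec (map h [0..<m])) = (\<Sum>l<m. if h l then g l else 0)"
  by (induction m) (simp_all add: dot_append, simp_all add: dot_def ivec_def)

lemma dot_unit_vector:
  assumes "k < length u"
  shows "dot (map (\<lambda>l. of_bool (l = k)) [0..<length u]) (ivec u) = of_bool (u ! k)"
proof -
  have "dot (map (\<lambda>l. of_bool (l = k)) [0..<length u]) (ivec (map ((!) u) [0..<length u]))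
      = (\<Sum>l<length u. if l = k then of_bool (u ! k) else 0)"
    unfolding dot_map_upt by (rule sum.cong) auto
  then show ?thesis using assms by (simp add: map_nth)
qed

definition backward_diff :: "(nat \<Rightarrow> int) \<Rightarrow> nat \<Rightarrow> int" where
  "backward_diff f l = (if l = 0 then f 0 else f l - f (l - 1))"

definition unary :: "nat \<Rightarrow> nat \<Rightarrow> bool list" where
  "unary s p = map (\<lambda>j. j \<le> p) [0..<s]"

definition bits :: "nat \<Rightarrow> nat \<Rightarrow> bool list" where
  "bits t p = map (bit p) [0..<t]"

lemma length_unary [simp]: "length (unary s p) = s"
  by (simp add: unary_def)

lemma length_bits [simp]: "length (bits t p) = t"
  by (simp add: bits_def)

lemma sum_backward_diff: "(\<Sum>l\<le>p. backward_diff f l) = f p"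
  by (induction p) (auto simp: backward_diff_def)

lemma dot_backward_diff_unary:
  assumes "p < s"
  shows "dot (map (backward_diff f) [0..<s]) (ivec (unary s p)) = f p"
proof -
  have "dot (map (backward_diff f) [0..<s]) (ivec (unary s p))
      = (\<Sum>l\<in>{..<s} \<inter> {..p}. backward_diff f l)"
    by (simp add: unary_def dot_map_upt sum.inter_restrict if_distrib cong: if_cong)
  also have "{..<s} \<inter> {..p} = {..p}"
    using assms by auto
  finally show ?thesis
    by (simp add: sum_backward_diff)
qed

lemma dot_powers_of_two_bits:
  assumes "p < 2 ^ t"
  shows "dot (map (\<lambda>l. 2 ^ l) [0..<t]) (ivec (bits t p)) = int p"
proof -
  have "dot (map (\<lambda>l. 2 ^ l) [0..<t]) (ivec (bits t p)) = int (\<Sum>l<t. 2 ^ l * of_bool (bit p l))"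
    by (simp add: bits_def dot_map_upt of_bool_def if_distrib cong: if_cong)
  also have "(\<Sum>l<t. 2 ^ l * of_bool (bit p l)) = take_bit t p"
    by (simp flip: horner_sum_bit_eq_take_bit add: horner_sum_eq_sum mult.commute atLeast0LessThan)
  also have "take_bit t p = p"
    using assms by (simp add: take_bit_nat_eq_self)
  finally show ?thesis .
qed

definition pad_right :: "nat \<Rightarrow> (int list \<times> int) list \<Rightarrow> (int list \<times> int) list" where
  "pad_right m l = map (\<lambda>(w, \<theta>). (w @ replicate m 0, \<theta>)) l"

definition pad_left :: "nat \<Rightarrow> (int list \<times> int) list \<Rightarrow> (int list \<times> int) list" where
  "pad_left m l = map (\<lambda>(w, \<theta>). (replicate m 0 @ w, \<theta>)) l"

definition copy_layer :: "nat \<Rightarrow> (int list \<times> int) list" where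
  "copy_layer m = map (\<lambda>k. (map (\<lambda>l. of_bool (l = k)) [0..<m], 1)) [0..<m]"

lemma layer_apply_append [simp]: "layer_apply (l @ l') u = layer_apply l u @ layer_apply l' u"
  by (simp add: layer_apply_def)

lemma layer_apply_pad_right:
  assumes "\<forall>p\<in>set l. length (fst p) = length u"
  shows "layer_apply (pad_right m l) (u @ u') = layer_apply l u"
  using assms by (auto simp: layer_apply_def pad_right_def thr_def dot_append dot_replicate_zero)

lemma layer_apply_pad_left:
  assumes "length u = m"
  shows "layer_apply (pad_left m l) (u @ u') = layer_apply l u'"
  using assms by (auto simp: layer_apply_def pad_left_def thr_def dot_append dot_replicate_zero)

lemma layer_apply_copy_layer: "layer_apply (copy_layer (length u)) u = u"
proof -
  have "layer_apply (copy_layer (length u)) u = map ((!) u) [0..<length u]"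
    by (simp add: layer_apply_def copy_layer_def thr_def dot_unit_vector)
  then show ?thesis
    by (simp add: map_nth)
qed

definition unary_to_binary :: "nat \<Rightarrow> nat \<Rightarrow> (int list \<times> int) list" where
  "unary_to_binary s t = map (\<lambda>j. (map (backward_diff (\<lambda>p. of_bool (bit p j))) [0..<s], 1)) [0..<t]"

definition binary_to_unary :: "nat \<Rightarrow> nat \<Rightarrow> (int list \<times> int) list" where
  "binary_to_unary t s = map (\<lambda>r. (map (\<lambda>l. 2 ^ l) [0..<t], int r)) [0..<s]"

lemma weight_lengths_unary_to_binary [simp]: "\<forall>p\<in>set (unary_to_binary s t). length (fst p) = s"
  by (auto simp: unary_to_binary_def)

lemma weight_lengths_binary_to_unary [simp]: "\<forall>p\<in>set (binary_to_unary t s). length (fst p) = t"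
  by (auto simp: binary_to_unary_def)

lemma layer_apply_unary_to_binary:
  assumes "p < s"
  shows "layer_apply (unary_to_binary s t) (unary s p) = bits t p"
  using assms
  by (simp add: layer_apply_def unary_to_binary_def thr_def bits_def dot_backward_diff_unary)

lemma layer_apply_binary_to_unary:
  assumes "p < 2 ^ t"
  shows "layer_apply (binary_to_unary t s) (bits t p) = unary s p"
  using assms
  by (simp add: layer_apply_def binary_to_unary_def thr_def unary_def dot_powers_of_two_bits)

definition row_layer :: "int list \<Rightarrow> (nat \<Rightarrow> int) \<Rightarrow> nat \<Rightarrow> (int list \<times> int) list" where
  "row_layer a V s = map (\<lambda>r. (a, V (r * s))) [0..<s] @ copy_layer (length a)"

definition column_layer :: "int list \<Rightarrow> (nat \<Rightarrow> int) \<Rightarrow> nat \<Rightarrow> (int list \<times> int) list" where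
  "column_layer a V s = pad_right (length a) (copy_layer s) @
     map (\<lambda>c. (map (backward_diff (\<lambda>r. - V (r * s + c))) [0..<s] @ a, 0)) [0..<s]"

lemma layer_apply_row_layer:
  assumes "strict_mono V" and "0 < s" and "length u = length a" and "dot a (ivec u) = V i"
  shows "layer_apply (row_layer a V s) u = unary s (i div s) @ u"
proof -
  have "V (r * s) \<le> V i \<longleftrightarrow> r \<le> i div s" for r
    using assms(1,2) by (simp add: strict_mono_less_eq less_eq_div_iff_mult_less_eq)
  then show ?thesis
    using assms(3,4) layer_apply_copy_layer[of u]
    by (simp add: row_layer_def layer_apply_def thr_def unary_def)
qed

lemma layer_apply_column_layer:
  assumes "strict_mono V" and "i < s * s" and "length u = length a" and "dot a (ivec u) = V i"
  shows "layer_apply (column_layer a V s) (unary s (i div s) @ u)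
    = unary s (i div s) @ unary s (i mod s)"
proof -
  have row: "i div s < s"
    using assms(2) by (simp add: less_mult_imp_div_less)
  have "V (i div s * s + c) \<le> V i \<longleftrightarrow> c \<le> i mod s" for c
  proof -
    have "i div s * s + i mod s = i"
      by simp
    then have "i div s * s + c \<le> i \<longleftrightarrow> c \<le> i mod s"
      by linarith
    then show ?thesis
      using assms(1) by (simp add: strict_mono_less_eq)
  qed
  then have "layer_apply
      (map (\<lambda>c. (map (backward_diff (\<lambda>r. - V (r * s + c))) [0..<s] @ a, 0)) [0..<s])
      (unary s (i div s) @ u) = unary s (i mod s)"
    using row assms(3,4) unfolding unary_def[of s "i mod s"]
    by (simp add: layer_apply_def thr_def dot_append dot_backward_diff_unary)
  moreover have
    "layer_apply (pad_right (length a) (copy_layer s)) (unary s (i div s) @ u) = unary s (i div s)"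
    using layer_apply_copy_layer[of "unary s (i div s)"]
    by (simp add: layer_apply_pad_right copy_layer_def)
  ultimately show ?thesis
    by (simp add: column_layer_def)
qed

definition lookup_layer :: "(nat \<Rightarrow> bool list) \<Rightarrow> nat \<Rightarrow> nat \<Rightarrow> (int list \<times> int) list" where
  "lookup_layer x s D = concat (map (\<lambda>r. map (\<lambda>d.
     (map (backward_diff (\<lambda>p. of_bool (p = r))) [0..<s] @
      map (backward_diff (\<lambda>q. of_bool (x (r * s + q) ! d))) [0..<s], 2)) [0..<D]) [0..<s])"

definition block_or_layer :: "nat \<Rightarrow> nat \<Rightarrow> (int list \<times> int) list" where
  "block_or_layer s D =
     map (\<lambda>d. (concat (replicate s (map (\<lambda>l. of_bool (l = d)) [0..<D])), 1)) [0..<D]"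

lemma layer_apply_lookup_layer:
  assumes "p < s" and "q < s"
  shows "layer_apply (lookup_layer x s D) (unary s p @ unary s q)
    = concat (map (\<lambda>r. map (\<lambda>d. r = p \<and> x (r * s + q) ! d) [0..<D]) [0..<s])"
proof -
  have "thr (map (backward_diff (\<lambda>p. of_bool (p = r))) [0..<s] @
      map (backward_diff (\<lambda>q. of_bool (x (r * s + q) ! d))) [0..<s], 2) (unary s p @ unary s q)
      \<longleftrightarrow> r = p \<and> x (r * s + q) ! d" for r d
    using assms by (simp add: thr_def dot_append dot_backward_diff_unary)
  then show ?thesis
    by (simp add: lookup_layer_def layer_apply_def map_concat o_def)
qed

lemma dot_concat_replicate:
  assumes "\<forall>y\<in>set ys. length y = length w"
  shows "dot (concat (replicate (length ys) w)) (ivec (concat ys)) = (\<Sum>y\<leftarrow>ys. dot w (ivec y))"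
  using assms by (induction ys) (simp_all add: dot_append, simp add: dot_def ivec_def)

lemma sum_list_of_bool_ge_one: "1 \<le> (\<Sum>y\<leftarrow>ys. of_bool (P y) :: int) \<longleftrightarrow> (\<exists>y\<in>set ys. P y)"
proof (induction ys)
  case (Cons y ys)
  have "0 \<le> (\<Sum>y\<leftarrow>ys. of_bool (P y) :: int)"
    by (rule sum_list_nonneg) auto
  with Cons.IH show ?case
    by auto
qed simp

lemma layer_apply_block_or_layer:
  assumes "\<forall>y\<in>set ys. length y = D"
  shows "layer_apply (block_or_layer (length ys) D) (concat ys)
    = map (\<lambda>d. \<exists>y\<in>set ys. y ! d) [0..<D]"
proof -
  have "thr (concat (replicate (length ys) (map (\<lambda>l. of_bool (l = d)) [0..<D])), 1) (concat ys)
      \<longleftrightarrow> (\<exists>y\<in>set ys. y ! d)" if "d < D" for d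
  proof -
    have "(\<Sum>y\<leftarrow>ys. dot (map (\<lambda>l. of_bool (l = d)) [0..<D]) (ivec y)) = (\<Sum>y\<leftarrow>ys. of_bool (y ! d))"
      using assms that dot_unit_vector[of d] by (metis (no_types, lifting) map_cong)
    then show ?thesis
      using assms by (simp add: thr_def dot_concat_replicate sum_list_of_bool_ge_one)
  qed
  then show ?thesis
    by (simp add: block_or_layer_def layer_apply_def)
qed

definition encoder :: "int list \<Rightarrow> (nat \<Rightarrow> int) \<Rightarrow> nat \<Rightarrow> nat \<Rightarrow> (int list \<times> int) list list" where
  "encoder a V s t =
     [row_layer a V s, column_layer a V s,
      pad_right s (unary_to_binary s t) @ pad_left s (unary_to_binary s t)]"

definition decoder :: "(nat \<Rightarrow> bool list) \<Rightarrow> nat \<Rightarrow> nat \<Rightarrow> nat \<Rightarrow> (int list \<times> int) list list" where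
  "decoder x s t D =
     [pad_right t (binary_to_unary t s) @ pad_left t (binary_to_unary t s),
      lookup_layer x s D, block_or_layer s D]"

lemma net_apply_encoder:
  assumes "strict_mono V" and "i < s * s" and "length u = length a" and "dot a (ivec u) = V i"
  shows "net_apply (encoder a V s t) u = bits t (i div s) @ bits t (i mod s)"
proof -
  have "0 < s"
    using assms(2) by (auto intro: Nat.gr0I)
  moreover have "i div s < s"
    using assms(2) by (simp add: less_mult_imp_div_less)
  moreover have "i mod s < s"
    using \<open>0 < s\<close> by simp
  ultimately show ?thesis
    using assms
    by (simp add: encoder_def net_apply_def layer_apply_row_layer layer_apply_column_layer
        layer_apply_pad_right layer_apply_pad_left layer_apply_unary_to_binary)
qed

lemma net_apply_decoder:
  assumes "p < s" and "q < s" and "s \<le> 2 ^ t" and "length (x (p * s + q)) = D"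
  shows "net_apply (decoder x s t D) (bits t p @ bits t q) = x (p * s + q)"
proof -
  define ys where "ys = map (\<lambda>r. map (\<lambda>d. r = p \<and> x (r * s + q) ! d) [0..<D]) [0..<s]"
  have "layer_apply (pad_right t (binary_to_unary t s) @ pad_left t (binary_to_unary t s))
      (bits t p @ bits t q) = unary s p @ unary s q"
    using assms(1-3)
    by (simp add: layer_apply_pad_right layer_apply_pad_left layer_apply_binary_to_unary)
  moreover have "layer_apply (lookup_layer x s D) (unary s p @ unary s q) = concat ys"
    using assms(1,2) by (simp add: layer_apply_lookup_layer ys_def)
  moreover have "layer_apply (block_or_layer s D) (concat ys) = map (\<lambda>d. x (p * s + q) ! d) [0..<D]"
    using layer_apply_block_or_layer[of ys D] assms(1) by (auto simp: ys_def)
  moreover have "map (\<lambda>d. x (p * s + q) ! d) [0..<D] = x (p * s + q)"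
    using map_nth[of "x (p * s + q)"] assms(4) by simp
  ultimately show ?thesis
    by (simp add: decoder_def net_apply_def)
qed

lemma net_apply_decoder_encoder:
  assumes "strict_mono V" and "i < s * s" and "s \<le> 2 ^ t"
    and "length (x i) = length a" and "dot a (ivec (x i)) = V i"
  shows "net_apply (decoder x s t (length a)) (net_apply (encoder a V s t) (x i)) = x i"
proof -
  have "0 < s"
    using assms(2) by (auto intro: Nat.gr0I)
  then have "i div s < s" and "i mod s < s"
    using assms(2) by (simp_all add: less_mult_imp_div_less)
  then show ?thesis
    using assms net_apply_encoder[of V i s "x i" a t]
      net_apply_decoder[of "i div s" s "i mod s" t x]
    by simp
qed

lemma length_encoder [simp]: "length (encoder a V s t) = 3"
  by (simp add: encoder_def)

lemma length_decoder [simp]: "length (decoder x s t D) = 3"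
  by (simp add: decoder_def)

lemma wf_net_encoder_decoder:
  assumes "length a = D"
  shows "wf_net D (encoder a V s t @ decoder x s t D)"
  using assms
  by (auto simp: encoder_def decoder_def row_layer_def column_layer_def copy_layer_def pad_right_def
      pad_left_def lookup_layer_def block_or_layer_def unary_to_binary_def binary_to_unary_def
      length_concat o_def sum_list_triv sum_list_replicate)

lemma layer_widths_encoder_decoder:
  "map length (encoder a V s t @ decoder x s t D) = [s + length a, s + s, t + t, s + s, s * D, D]"
  by (simp add: encoder_def decoder_def row_layer_def column_layer_def copy_layer_def pad_right_def
      pad_left_def lookup_layer_def block_or_layer_def unary_to_binary_def binary_to_unary_def
      length_concat o_def sum_list_triv sum_list_replicate)

theorem theorem22:
  fixes n D :: nat and x :: "nat \<Rightarrow> bool list" and a :: "int list"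
  assumes "n \<ge> 1" and "D \<ge> 1"
    and "\<forall>i<n. length (x i) = D"
    and "inj_on x {..<n}"
    and "length a = D"
    and "\<forall>i j. i < j \<and> j < n \<longrightarrow> dot a (ivec (x i)) < dot a (ivec (x j))"
  shows "\<exists>Ls :: (int list \<times> int) list list. \<exists>k :: nat.
           length Ls = 6 \<and> wf_net D Ls \<and> length (Ls ! 5) = D \<and>
           2 \<le> k \<and> k \<le> 6 \<and>
           length (Ls ! (k - 2)) = 2 * nat \<lceil>log 2 (sqrt (real n))\<rceil> \<and>
           (\<Sum>t\<in>{2..6} - {k}. length (Ls ! (t - 2))) = (D + 5) * nat \<lceil>sqrt (real n)\<rceil> + D \<and>
           (\<forall>i<n. net_apply (drop (k - 1) Ls) (net_apply (take (k - 1) Ls) (x i)) = x i)"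
proof -
  \<comment> \<open>Neither inj_on x {..<n} (implied by the strict order) nor 1 \<le> D is needed.\<close>
  define s where "s = nat \<lceil>sqrt (real n)\<rceil>"
  define t where "t = nat \<lceil>log 2 (sqrt (real n))\<rceil>"
  have "n \<le> s * s"
    using le_ceiling_sqrt_squared[of n] by (simp add: s_def power2_eq_square)
  have "s \<le> 2 ^ t"
    using ceiling_le_two_power_ceiling_log[of "sqrt (real n)"] assms(1) by (simp add: s_def t_def)
  obtain V where "strict_mono V" and V: "\<And>i. i < n \<Longrightarrow> V i = dot a (ivec (x i))"
    using strict_mono_extension[of n "\<lambda>i. dot a (ivec (x i))"] assms(6) by blast
  define Ls where "Ls = encoder a V s t @ decoder x s t D"
  have widths: "map length Ls = [s + D, s + s, t + t, s + s, s * D, D]"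
    using layer_widths_encoder_decoder assms(5) by (simp add: Ls_def)
  have "length Ls = 6"
    by (simp add: Ls_def)
  have "length (Ls ! j) = [s + D, s + s, t + t, s + s, s * D, D] ! j" if "j < 6" for j
    using widths that \<open>length Ls = 6\<close> by (metis nth_map)
  moreover have "net_apply (drop 3 Ls) (net_apply (take 3 Ls) (x i)) = x i" if "i < n" for i
    using net_apply_decoder_encoder[of V i s t x a] that \<open>n \<le> s * s\<close> \<open>s \<le> 2 ^ t\<close>
      \<open>strict_mono V\<close> V assms(3,5)
    by (simp add: Ls_def)
  moreover have "{2..6::nat} - {4} = {2, 3, 5, 6}"
    by auto
  ultimately show ?thesis
    using \<open>length Ls = 6\<close> wf_net_encoder_decoder[OF assms(5)]
    by (intro exI[of _ Ls] exI[of _ 4]) (simp add: Ls_def s_def t_def algebra_simps)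
qed

end
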